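(* Let $L$ be a finite modular lattice with exactly two coatoms and $U$ a finite modular lattice with exactly two atoms. Then any vertical 2-sum $L +_2 U$ is a modular lattice.
   Context: Let $L' = L \setminus \{\top_L\}$ and $U' = U \setminus \{\bot_U\}$. A vertical 2-sum $L +_2 U$ is the poset obtained from the disjoint union of $L'$ and $U'$ by identifying the two coatoms of $L$ with the two atoms of $U$ via some bijection; $x \le y$ iff $x,y \in L'$ and $x \le_L y$, or $x,y \in U'$ and $x \le_U y$, or $x \in L'$, $y \in U'$ and there is an identified element $c$ with $x \le_L c$ and $c \le_U y$. (This poset is a lattice.) *)

theory Defs
  imports Main "HOL-Algebra.Lattice"
begin

definition is_modular :: "('a::lattice) itself \<Rightarrow> bool" where
  "is_modular _ \<longleftrightarrow> (\<forall>x y z::'a. x \<le> z \<longrightarrow> sup x (inf y z) = inf (sup x y) z)"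

definition coatoms :: "('a::bounded_lattice) set" where
  "coatoms = {c. c < Orderings.top \<and> \<not> (\<exists>x. c < x \<and> x < Orderings.top)}"

definition atoms :: "('a::bounded_lattice) set" where
  "atoms = {a. Orderings.bot < a \<and> \<not> (\<exists>x. Orderings.bot < x \<and> x < a)}"

(* Vertical 2-sum L +_2 U along a bijection f : coatoms(L) -> atoms(U).
   Elements are represented in 'a + 'b: Inl x for x in L' = L - {top};
   Inr y for y in U' = U - {bot} that is not an atom of U (the atoms of U
   are identified with the coatoms of L and represented by the latter). *)
definition vsum2_carrier :: "(('a::bounded_lattice) + ('b::bounded_lattice)) set" where
  "vsum2_carrier = {Inl x | x. x \<noteq> Orderings.top} \<union> {Inr y | y. y \<noteq> Orderings.bot \<and> y \<notin> atoms}"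

(* embedding of the identified representatives: an L'-element x is viewed
   in U as f x when x is a coatom *)
fun vsum2_le :: "('a::bounded_lattice \<Rightarrow> 'b::bounded_lattice) \<Rightarrow> ('a + 'b) \<Rightarrow> ('a + 'b) \<Rightarrow> bool" where
  "vsum2_le f (Inl x) (Inl x') \<longleftrightarrow> x \<le> x'"
| "vsum2_le f (Inr y) (Inr y') \<longleftrightarrow> y \<le> y'"
| "vsum2_le f (Inl x) (Inr y) \<longleftrightarrow> (\<exists>c\<in>coatoms. x \<le> c \<and> f c \<le> y)"
| "vsum2_le f (Inr y) (Inl x) \<longleftrightarrow> False"

definition vsum2 :: "('a::bounded_lattice \<Rightarrow> 'b::bounded_lattice) \<Rightarrow> ('a + 'b) gorder" where
  "vsum2 f = \<lparr>carrier = vsum2_carrier, eq = (=), le = vsum2_le f\<rparr>"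

definition modular_lattice :: "('c, 'd) gorder_scheme \<Rightarrow> bool" where
  "modular_lattice P \<longleftrightarrow> lattice P \<and>
     (\<forall>x\<in>carrier P. \<forall>y\<in>carrier P. \<forall>z\<in>carrier P.
        x \<sqsubseteq>\<^bsub>P\<^esub> z \<longrightarrow> x \<squnion>\<^bsub>P\<^esub> (y \<sqinter>\<^bsub>P\<^esub> z) = (x \<squnion>\<^bsub>P\<^esub> y) \<sqinter>\<^bsub>P\<^esub> z)"

end

theory Submission
  imports Defs
begin

(*
  Map the 2-sum P into L \<times> U: the element x of L' goes to x paired with the meet of the
  atoms f c with x \<le> c, and the element y of the U-part goes to y paired with the join of
  the coatoms c with f c \<le> y. This is an order embedding but not a lattice embedding.
  Still, the L-coordinate preserves all meets and every join with an element of L', and the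
  U-coordinate preserves all joins and every meet with an element of the U-part. So for
  x \<le> z the two sides of the modular law have equal L-coordinates (by modularity of L) when
  x is in L', and equal U-coordinates (by modularity of U) when z is in the U-part. If x and z
  both lie in L', so do both sides, and there the L-coordinate determines the element;
  dually if both lie in the U-part.
*)

lemma lattice_by_join_meet:
  fixes P :: "('c, 'd) gorder_scheme"
  assumes po: "partial_order P"
    and J: "\<And>x y. x \<in> carrier P \<Longrightarrow> y \<in> carrier P \<Longrightarrow> J x y \<in> carrier P \<and> x \<sqsubseteq>\<^bsub>P\<^esub> J x y \<and> y \<sqsubseteq>\<^bsub>P\<^esub> J x y
        \<and> (\<forall>z\<in>carrier P. x \<sqsubseteq>\<^bsub>P\<^esub> z \<and> y \<sqsubseteq>\<^bsub>P\<^esub> z \<longrightarrow> J x y \<sqsubseteq>\<^bsub>P\<^esub> z)"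
    and M: "\<And>x y. x \<in> carrier P \<Longrightarrow> y \<in> carrier P \<Longrightarrow> M x y \<in> carrier P \<and> M x y \<sqsubseteq>\<^bsub>P\<^esub> x \<and> M x y \<sqsubseteq>\<^bsub>P\<^esub> y
        \<and> (\<forall>z\<in>carrier P. z \<sqsubseteq>\<^bsub>P\<^esub> x \<and> z \<sqsubseteq>\<^bsub>P\<^esub> y \<longrightarrow> z \<sqsubseteq>\<^bsub>P\<^esub> M x y)"
  shows "lattice P"
    and "\<And>x y. x \<in> carrier P \<Longrightarrow> y \<in> carrier P \<Longrightarrow> x \<squnion>\<^bsub>P\<^esub> y = J x y"
    and "\<And>x y. x \<in> carrier P \<Longrightarrow> y \<in> carrier P \<Longrightarrow> x \<sqinter>\<^bsub>P\<^esub> y = M x y"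
proof -
  interpret partial_order P by (rule po)
  have least_J: "least P (J x y) (Upper P {x, y})" if "x \<in> carrier P" "y \<in> carrier P" for x y
    using J[OF that] that unfolding least_def Upper_def by auto
  have greatest_M: "greatest P (M x y) (Lower P {x, y})" if "x \<in> carrier P" "y \<in> carrier P" for x y
    using M[OF that] that unfolding greatest_def Lower_def by auto
  show "lattice P"
    by unfold_locales (use least_J greatest_M in blast)+
  show "x \<squnion>\<^bsub>P\<^esub> y = J x y" if "x \<in> carrier P" "y \<in> carrier P" for x y
    unfolding join_def sup_def
    by (rule some_equality) (use least_J[OF that] least_unique in blast)+
  show "x \<sqinter>\<^bsub>P\<^esub> y = M x y" if "x \<in> carrier P" "y \<in> carrier P" for x y
    unfolding meet_def inf_def
    by (rule some_equality) (use greatest_M[OF that] greatest_unique in blast)+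
qed

lemma ex_coatom_above:
  fixes x :: "'a::{finite, bounded_lattice}"
  assumes "x \<noteq> Orderings.top"
  shows "\<exists>c\<in>coatoms. x \<le> c"
proof -
  obtain m where m: "x \<le> m" "m \<noteq> Orderings.top" and max: "\<And>z. m \<le> z \<Longrightarrow> z \<noteq> Orderings.top \<Longrightarrow> m = z"
    using finite_has_maximal2[of "{z. x \<le> z \<and> z \<noteq> Orderings.top}" x] assms by auto
  have "m \<in> coatoms"
    unfolding coatoms_def
  proof safe
    show "m < Orderings.top"
      using m(2) less_top by blast
    fix z assume "m < z" "z < Orderings.top"
    with max[of z] show False
      by (auto simp: order.strict_iff_order)
  qed
  with m show ?thesis by blast
qed

lemma ex_atom_below:
  fixes y :: "'a::{finite, bounded_lattice}"
  assumes "y \<noteq> bot"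
  shows "\<exists>a\<in>atoms. a \<le> y"
proof -
  obtain m where m: "m \<le> y" "m \<noteq> bot" and min: "\<And>z. z \<le> m \<Longrightarrow> z \<noteq> bot \<Longrightarrow> m = z"
    using finite_has_minimal2[of "{z. z \<le> y \<and> z \<noteq> bot}" y] assms by auto
  have "m \<in> atoms"
    unfolding atoms_def
  proof safe
    show "bot < m"
      using m(2) bot_less by blast
    fix z assume "bot < z" "z < m"
    with min[of z] show False
      by (auto simp: order.strict_iff_order)
  qed
  with m show ?thesis by blast
qed

lemma coatom_less_top: "c \<in> coatoms \<Longrightarrow> c < Orderings.top"
  by (simp add: coatoms_def)

lemma bot_less_atom: "a \<in> atoms \<Longrightarrow> bot < a"
  by (simp add: atoms_def)

lemma coatom_sup_eq_top:
  fixes c :: "'a::bounded_lattice"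
  assumes "c \<in> coatoms" and "\<not> x \<le> c"
  shows "sup x c = Orderings.top"
proof -
  have "c < sup x c"
    using assms(2) by (simp add: order.strict_iff_order sup.absorb_iff2 sup_commute)
  with assms(1) have "\<not> sup x c < Orderings.top"
    unfolding coatoms_def by blast
  then show ?thesis
    using less_top by blast
qed

lemma atom_inf_eq_bot:
  fixes a :: "'a::bounded_lattice"
  assumes "a \<in> atoms" and "\<not> a \<le> y"
  shows "inf a y = bot"
proof -
  have "inf a y < a"
    using assms(2) by (metis inf.cobounded1 inf.cobounded2 order_less_le)
  with assms(1) have "\<not> bot < inf a y"
    unfolding atoms_def by blast
  then show ?thesis
    using bot_less by blast
qed

locale vsum2_setting =
  fixes f :: "'a::{finite, bounded_lattice} \<Rightarrow> 'b::{finite, bounded_lattice}"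
    and c1 c2 :: 'a
  assumes modular_L: "\<And>x y z :: 'a. x \<le> z \<Longrightarrow> sup x (inf y z) = inf (sup x y) z"
    and modular_U: "\<And>x y z :: 'b. x \<le> z \<Longrightarrow> sup x (inf y z) = inf (sup x y) z"
    and coatoms_eq: "coatoms = {c1, c2}"
    and coatoms_distinct: "c1 \<noteq> c2"
    and atoms_eq: "atoms = {f c1, f c2}"
    and atoms_distinct: "f c1 \<noteq> f c2"
begin

abbreviation "a1 \<equiv> f c1"
abbreviation "a2 \<equiv> f c2"

lemma below_coatom: "x \<noteq> Orderings.top \<Longrightarrow> x \<le> c1 \<or> x \<le> c2"
  using ex_coatom_above[of x] by (auto simp: coatoms_eq)

lemma above_atom: "y \<noteq> bot \<Longrightarrow> a1 \<le> y \<or> a2 \<le> y"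
  using ex_atom_below[of y] by (auto simp: atoms_eq)

lemma coatom_sup_eq_top1: "\<not> x \<le> c1 \<Longrightarrow> sup x c1 = Orderings.top"
  and coatom_sup_eq_top2: "\<not> x \<le> c2 \<Longrightarrow> sup x c2 = Orderings.top"
  by (simp_all add: coatom_sup_eq_top coatoms_eq)

lemma atom_inf_eq_bot1: "\<not> a1 \<le> y \<Longrightarrow> inf a1 y = bot"
  and atom_inf_eq_bot2: "\<not> a2 \<le> y \<Longrightarrow> inf a2 y = bot"
  by (simp_all add: atom_inf_eq_bot atoms_eq)

lemma coatoms_ne_top: "c1 \<noteq> Orderings.top" "c2 \<noteq> Orderings.top"
  using coatom_less_top[of c1] coatom_less_top[of c2] by (auto simp: coatoms_eq)

lemma atoms_ne_bot: "a1 \<noteq> bot" "a2 \<noteq> bot"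
  using bot_less_atom[of a1] bot_less_atom[of a2] by (auto simp: atoms_eq)

lemma coatoms_incomparable: "\<not> c1 \<le> c2" "\<not> c2 \<le> c1"
  using coatom_sup_eq_top1[of c2] coatom_sup_eq_top2[of c1] coatoms_distinct coatoms_ne_top
  by (metis sup.absorb2 sup_commute)+

lemma atoms_incomparable: "\<not> a1 \<le> a2" "\<not> a2 \<le> a1"
  using atom_inf_eq_bot1[of a2] atom_inf_eq_bot2[of a1] atoms_distinct atoms_ne_bot
  by (metis inf.absorb1 inf_commute)+

lemma sup_coatoms: "sup c1 c2 = Orderings.top"
  using coatom_sup_eq_top2 coatoms_incomparable(1) by blast

lemma inf_atoms: "inf a1 a2 = bot"
  using atom_inf_eq_bot1 atoms_incomparable(1) by blast

definition coatom_trace :: "'b \<Rightarrow> 'a" where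
  "coatom_trace y = sup (if a1 \<le> y then c1 else bot) (if a2 \<le> y then c2 else bot)"

definition atom_trace :: "'a \<Rightarrow> 'b" where
  "atom_trace x = inf (if x \<le> c1 then a1 else Orderings.top) (if x \<le> c2 then a2 else Orderings.top)"

lemma coatom_trace_simps:
  "a1 \<le> y \<Longrightarrow> a2 \<le> y \<Longrightarrow> coatom_trace y = Orderings.top"
  "a1 \<le> y \<Longrightarrow> \<not> a2 \<le> y \<Longrightarrow> coatom_trace y = c1"
  "\<not> a1 \<le> y \<Longrightarrow> a2 \<le> y \<Longrightarrow> coatom_trace y = c2"
  by (simp_all add: coatom_trace_def sup_coatoms)

lemma atom_trace_simps:
  "x \<le> c1 \<Longrightarrow> x \<le> c2 \<Longrightarrow> atom_trace x = bot"
  "x \<le> c1 \<Longrightarrow> \<not> x \<le> c2 \<Longrightarrow> atom_trace x = a1"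
  "\<not> x \<le> c1 \<Longrightarrow> x \<le> c2 \<Longrightarrow> atom_trace x = a2"
  by (simp_all add: atom_trace_def inf_atoms)

lemma coatom_trace_mono: "y \<le> y' \<Longrightarrow> coatom_trace y \<le> coatom_trace y'"
  unfolding coatom_trace_def by (intro sup_mono) (auto dest: order_trans)

lemma atom_trace_mono: "x \<le> x' \<Longrightarrow> atom_trace x \<le> atom_trace x'"
  unfolding atom_trace_def by (intro inf_mono) (auto dest: order_trans)

lemma coatom_trace_eq_top_iff: "coatom_trace y = Orderings.top \<longleftrightarrow> a1 \<le> y \<and> a2 \<le> y"
proof -
  have "(bot :: 'a) \<noteq> Orderings.top"
    using coatoms_ne_top(1) by (metis bot_least top_unique)
  then show ?thesis
    using coatoms_ne_top by (auto simp: coatom_trace_def sup_coatoms)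
qed

definition upper :: "'b \<Rightarrow> bool" where
  "upper y \<longleftrightarrow> y \<noteq> bot \<and> y \<notin> atoms"

lemma upper_iff: "upper y \<longleftrightarrow> y \<noteq> bot \<and> y \<noteq> a1 \<and> y \<noteq> a2"
  by (simp add: upper_def atoms_eq)

lemma upper_mono:
  assumes "upper y" "y \<le> y'"
  shows "upper y'"
proof -
  have "bot < y"
    using assms(1) by (simp add: upper_def bot_less[symmetric])
  have "y' \<notin> atoms"
  proof
    assume "y' \<in> atoms"
    with \<open>bot < y\<close> have "\<not> y < y'"
      unfolding atoms_def by blast
    with assms(2) have "y' = y"
      using order_le_less by blast
    with assms(1) \<open>y' \<in> atoms\<close> show False
      by (simp add: upper_def)
  qed
  moreover have "y' \<noteq> bot"
    using order.strict_trans2[OF \<open>bot < y\<close> assms(2)] by simp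
  ultimately show ?thesis
    by (simp add: upper_def)
qed

lemma upper_sup_atoms: "upper (sup a1 a2)"
proof -
  have "a1 \<le> sup a1 a2" "a2 \<le> sup a1 a2"
    by simp_all
  then show ?thesis
    using atoms_incomparable atoms_ne_bot unfolding upper_iff
    by (auto simp: bot_unique sup.absorb_iff1[symmetric] sup.absorb_iff2[symmetric])
qed

lemma not_upper_atom_trace: "\<not> upper (atom_trace x)" if "x \<noteq> Orderings.top"
  using below_coatom[OF that] atoms_ne_bot by (cases "x \<le> c1"; cases "x \<le> c2") (auto simp: atom_trace_simps upper_iff)

lemma coatom_trace_inf:
  "inf y y' \<noteq> bot \<Longrightarrow> coatom_trace (inf y y') = inf (coatom_trace y) (coatom_trace y')"
  using above_atom[of "inf y y'"]
  by (cases "a1 \<le> y"; cases "a2 \<le> y"; cases "a1 \<le> y'"; cases "a2 \<le> y'")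
     (auto simp: coatom_trace_simps coatoms_incomparable inf_absorb1 inf_absorb2)

lemma atom_trace_sup:
  "sup x x' \<noteq> Orderings.top \<Longrightarrow> atom_trace (sup x x') = sup (atom_trace x) (atom_trace x')"
  using below_coatom[of "sup x x'"]
  by (cases "x \<le> c1"; cases "x \<le> c2"; cases "x' \<le> c1"; cases "x' \<le> c2")
     (auto simp: atom_trace_simps atoms_incomparable sup_absorb1 sup_absorb2)

lemma sup_atom_traces_eq_top:
  assumes "x \<noteq> Orderings.top" "x' \<noteq> Orderings.top" "sup x x' = Orderings.top"
  shows "sup (atom_trace x) (atom_trace x') = sup a1 a2"
proof -
  have "\<not> (x \<le> c1 \<and> x' \<le> c1)" "\<not> (x \<le> c2 \<and> x' \<le> c2)"
    using assms(3) coatoms_ne_top by (metis le_sup_iff top_unique)+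
  then show ?thesis
    using below_coatom[OF assms(1)] below_coatom[OF assms(2)]
    by (cases "x \<le> c1"; cases "x \<le> c2"; cases "x' \<le> c1"; cases "x' \<le> c2")
       (auto simp: atom_trace_simps sup_commute)
qed

lemma inf_coatom_traces_ne_top:
  assumes "\<not> upper (inf y y')"
  shows "inf (coatom_trace y) (coatom_trace y') \<noteq> Orderings.top"
  using assms upper_mono[OF upper_sup_atoms, of "inf y y'"]
  by (auto simp: coatom_trace_eq_top_iff)

lemma coatom_trace_sup_atom_trace:
  assumes "x \<noteq> Orderings.top" "y \<noteq> bot"
  shows "coatom_trace (sup (atom_trace x) y) = sup x (coatom_trace y)"
  using below_coatom[OF assms(1)] above_atom[OF assms(2)] coatom_sup_eq_top1[of x] coatom_sup_eq_top2[of x]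
  by (cases "x \<le> c1"; cases "x \<le> c2"; cases "a1 \<le> y"; cases "a2 \<le> y")
     (auto simp: atom_trace_simps coatom_trace_simps sup_absorb1 sup_absorb2 le_supI1 le_supI2)

lemma atom_trace_inf_coatom_trace:
  assumes "x \<noteq> Orderings.top" "y \<noteq> bot"
  shows "atom_trace (inf x (coatom_trace y)) = inf (atom_trace x) y"
  using below_coatom[OF assms(1)] above_atom[OF assms(2)] atom_inf_eq_bot1[of y] atom_inf_eq_bot2[of y]
  by (cases "x \<le> c1"; cases "x \<le> c2"; cases "a1 \<le> y"; cases "a2 \<le> y")
     (auto simp: atom_trace_simps coatom_trace_simps inf_absorb1 inf_absorb2 le_infI1 le_infI2)

lemma atom_trace_inf_coatom_traces:
  assumes "y \<noteq> bot" "y' \<noteq> bot" "\<not> upper (inf y y')"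
  shows "atom_trace (inf (coatom_trace y) (coatom_trace y')) = inf y y'"
proof -
  have not_both: "\<not> (a1 \<le> y \<and> a1 \<le> y' \<and> a2 \<le> y \<and> a2 \<le> y')"
    using assms(3) upper_mono[OF upper_sup_atoms, of "inf y y'"] by auto
  consider "inf y y' = bot" | "inf y y' = a1" | "inf y y' = a2"
    using assms(3) by (auto simp: upper_iff)
  then show ?thesis
  proof cases
    case 1
    then have "\<not> (a1 \<le> y \<and> a1 \<le> y')" "\<not> (a2 \<le> y \<and> a2 \<le> y')"
      using atoms_ne_bot by (metis le_inf_iff bot_unique)+
    then have "inf (coatom_trace y) (coatom_trace y') = inf c1 c2"
      using above_atom[OF assms(1)] above_atom[OF assms(2)]
      by (auto simp: coatom_trace_simps inf_commute)
    then show ?thesis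
      using 1 by (simp add: atom_trace_simps)
  next
    case 2
    then have "a1 \<le> y" "a1 \<le> y'"
      by (metis le_inf_iff order_refl)+
    then have "inf (coatom_trace y) (coatom_trace y') = c1"
      using not_both by (cases "a2 \<le> y"; cases "a2 \<le> y'") (simp_all add: coatom_trace_simps)
    then show ?thesis
      using 2 coatoms_incomparable by (simp add: atom_trace_simps)
  next
    case 3
    then have "a2 \<le> y" "a2 \<le> y'"
      by (metis le_inf_iff order_refl)+
    then have "inf (coatom_trace y) (coatom_trace y') = c2"
      using not_both by (cases "a1 \<le> y"; cases "a1 \<le> y'") (simp_all add: coatom_trace_simps)
    then show ?thesis
      using 3 coatoms_incomparable by (simp add: atom_trace_simps)
  qed
qed

lemma carrier_vsum2_simps [simp]:
  "Inl x \<in> carrier (vsum2 f) \<longleftrightarrow> x \<noteq> Orderings.top"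
  "Inr y \<in> carrier (vsum2 f) \<longleftrightarrow> upper y"
  by (auto simp: vsum2_def vsum2_carrier_def upper_def)

lemma le_Inl_Inr_iff:
  assumes "x \<noteq> Orderings.top" "y \<noteq> bot"
  shows "vsum2_le f (Inl x) (Inr y) \<longleftrightarrow> x \<le> coatom_trace y \<and> atom_trace x \<le> y"
  using below_coatom[OF assms(1)] above_atom[OF assms(2)] coatoms_incomparable
  by (cases "x \<le> c1"; cases "x \<le> c2"; cases "a1 \<le> y"; cases "a2 \<le> y")
     (auto simp: coatoms_eq coatom_trace_simps atom_trace_simps dest: order_trans)

fun proj_L :: "'a + 'b \<Rightarrow> 'a" where
  "proj_L (Inl x) = x"
| "proj_L (Inr y) = coatom_trace y"

fun proj_U :: "'a + 'b \<Rightarrow> 'b" where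
  "proj_U (Inl x) = atom_trace x"
| "proj_U (Inr y) = y"

lemma le_iff_proj:
  assumes "z \<in> carrier (vsum2 f)" "w \<in> carrier (vsum2 f)"
  shows "vsum2_le f z w \<longleftrightarrow> proj_L z \<le> proj_L w \<and> proj_U z \<le> proj_U w"
proof (cases z; cases w)
  fix y x assume "z = Inr y" "w = Inl x"
  then show ?thesis
    using assms upper_mono not_upper_atom_trace by auto
qed (use assms atom_trace_mono coatom_trace_mono le_Inl_Inr_iff upper_def in auto)

lemma proj_inj:
  assumes "z \<in> carrier (vsum2 f)" "w \<in> carrier (vsum2 f)"
    and "proj_L z = proj_L w" "proj_U z = proj_U w"
  shows "z = w"
proof (cases z; cases w)
  fix x y assume "z = Inl x" "w = Inr y"
  with assms show ?thesis
    using not_upper_atom_trace[of x] by simp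
next
  fix y x assume "z = Inr y" "w = Inl x"
  with assms show ?thesis
    using not_upper_atom_trace[of x] by simp
qed (use assms in auto)

lemma partial_order_vsum2: "partial_order (vsum2 f)"
proof -
  have "vsum2_le f x z" if "vsum2_le f x y" "vsum2_le f y z" for x y z
    using that by (cases x; cases y; cases z) (auto simp: coatoms_eq intro: order_trans)
  moreover have "x = y" if "vsum2_le f x y" "vsum2_le f y x" for x y
    using that by (cases x; cases y) auto
  moreover have "vsum2_le f x x" for x
    by (cases x) auto
  ultimately show ?thesis
    unfolding vsum2_def by unfold_locales auto
qed

fun vjoin :: "'a + 'b \<Rightarrow> 'a + 'b \<Rightarrow> 'a + 'b" where
  "vjoin (Inl x) (Inl x') =
     (if sup x x' = Orderings.top then Inr (sup (atom_trace x) (atom_trace x')) else Inl (sup x x'))"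
| "vjoin (Inl x) (Inr y) = Inr (sup (atom_trace x) y)"
| "vjoin (Inr y) (Inl x) = Inr (sup y (atom_trace x))"
| "vjoin (Inr y) (Inr y') = Inr (sup y y')"

fun vmeet :: "'a + 'b \<Rightarrow> 'a + 'b \<Rightarrow> 'a + 'b" where
  "vmeet (Inl x) (Inl x') = Inl (inf x x')"
| "vmeet (Inl x) (Inr y) = Inl (inf x (coatom_trace y))"
| "vmeet (Inr y) (Inl x) = Inl (inf (coatom_trace y) x)"
| "vmeet (Inr y) (Inr y') =
     \<comment> \<open>if \<open>inf y y'\<close> is an atom \<open>f c\<close>, the second branch gives its representative \<open>Inl c\<close>\<close>
     (if upper (inf y y') then Inr (inf y y') else Inl (inf (coatom_trace y) (coatom_trace y')))"

lemma vjoin_commute: "vjoin z w = vjoin w z"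
  by (cases z; cases w) (simp_all add: sup_commute)

lemma vmeet_commute: "vmeet z w = vmeet w z"
  by (cases z; cases w) (simp_all add: inf_commute)

lemma vjoin_closed:
  "z \<in> carrier (vsum2 f) \<Longrightarrow> w \<in> carrier (vsum2 f) \<Longrightarrow> vjoin z w \<in> carrier (vsum2 f)"
  by (cases z; cases w)
     (auto simp: sup_atom_traces_eq_top upper_sup_atoms elim: upper_mono)

lemma vmeet_closed:
  "z \<in> carrier (vsum2 f) \<Longrightarrow> w \<in> carrier (vsum2 f) \<Longrightarrow> vmeet z w \<in> carrier (vsum2 f)"
  by (cases z; cases w)
     (auto simp: inf_eq_top_iff dest: inf_coatom_traces_ne_top)

lemma proj_U_vjoin:
  "z \<in> carrier (vsum2 f) \<Longrightarrow> w \<in> carrier (vsum2 f) \<Longrightarrow>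
    proj_U (vjoin z w) = sup (proj_U z) (proj_U w)"
  by (cases z; cases w) (simp_all add: atom_trace_sup sup_atom_traces_eq_top)

lemma proj_L_vjoin:
  "z \<in> carrier (vsum2 f) \<Longrightarrow> w \<in> carrier (vsum2 f) \<Longrightarrow> isl z \<Longrightarrow>
    proj_L (vjoin z w) = sup (proj_L z) (proj_L w)"
  by (cases z; cases w)
     (simp_all add: sup_atom_traces_eq_top coatom_trace_sup_atom_trace coatom_trace_eq_top_iff upper_def)

lemma proj_L_vmeet:
  "z \<in> carrier (vsum2 f) \<Longrightarrow> w \<in> carrier (vsum2 f) \<Longrightarrow>
    proj_L (vmeet z w) = inf (proj_L z) (proj_L w)"
  by (cases z; cases w) (simp_all add: coatom_trace_inf upper_def)

lemma proj_U_vmeet: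
  "z \<in> carrier (vsum2 f) \<Longrightarrow> w \<in> carrier (vsum2 f) \<Longrightarrow> \<not> isl w \<Longrightarrow>
    proj_U (vmeet z w) = inf (proj_U z) (proj_U w)"
  by (cases z; cases w)
     (simp_all add: atom_trace_inf_coatom_trace atom_trace_inf_coatom_traces upper_def)

lemma vjoin_lub:
  assumes "z \<in> carrier (vsum2 f)" "w \<in> carrier (vsum2 f)"
  shows "vjoin z w \<in> carrier (vsum2 f) \<and> vsum2_le f z (vjoin z w) \<and> vsum2_le f w (vjoin z w) \<and>
    (\<forall>u\<in>carrier (vsum2 f). vsum2_le f z u \<and> vsum2_le f w u \<longrightarrow> vsum2_le f (vjoin z w) u)"
proof (cases "isl z \<or> isl w")
  case True
  have "proj_L (vjoin z w) = sup (proj_L z) (proj_L w)"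
    using True proj_L_vjoin[OF assms] proj_L_vjoin[OF assms(2,1)] by (metis vjoin_commute sup_commute)
  moreover have "proj_U (vjoin z w) = sup (proj_U z) (proj_U w)"
    using proj_U_vjoin[OF assms] .
  ultimately show ?thesis
    using assms vjoin_closed[OF assms] by (simp add: le_iff_proj)
next
  case False
  then obtain y y' where "z = Inr y" "w = Inr y'"
    by (cases z; cases w) auto
  moreover have "vsum2_le f (Inr y) u \<and> vsum2_le f (Inr y') u \<longrightarrow> vsum2_le f (Inr (sup y y')) u" for u
    by (cases u) auto
  ultimately show ?thesis
    using vjoin_closed[OF assms] by auto
qed

lemma vmeet_glb:
  assumes "z \<in> carrier (vsum2 f)" "w \<in> carrier (vsum2 f)"
  shows "vmeet z w \<in> carrier (vsum2 f) \<and> vsum2_le f (vmeet z w) z \<and> vsum2_le f (vmeet z w) w \<and>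
    (\<forall>u\<in>carrier (vsum2 f). vsum2_le f u z \<and> vsum2_le f u w \<longrightarrow> vsum2_le f u (vmeet z w))"
proof (cases "isl z \<and> isl w")
  case False
  have "proj_U (vmeet z w) = inf (proj_U z) (proj_U w)"
    using False proj_U_vmeet[OF assms] proj_U_vmeet[OF assms(2,1)] by (metis vmeet_commute inf_commute)
  moreover have "proj_L (vmeet z w) = inf (proj_L z) (proj_L w)"
    using proj_L_vmeet[OF assms] .
  ultimately show ?thesis
    using assms vmeet_closed[OF assms] by (simp add: le_iff_proj)
next
  case True
  then obtain x x' where "z = Inl x" "w = Inl x'"
    by (cases z; cases w) auto
  moreover have "vsum2_le f u (Inl x) \<and> vsum2_le f u (Inl x') \<longrightarrow> vsum2_le f u (Inl (inf x x'))" for u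
    by (cases u) auto
  ultimately show ?thesis
    using vmeet_closed[OF assms] by auto
qed

lemma lattice_vsum2: "lattice (vsum2 f)"
  and join_vsum2: "z \<in> carrier (vsum2 f) \<Longrightarrow> w \<in> carrier (vsum2 f) \<Longrightarrow> z \<squnion>\<^bsub>vsum2 f\<^esub> w = vjoin z w"
  and meet_vsum2: "z \<in> carrier (vsum2 f) \<Longrightarrow> w \<in> carrier (vsum2 f) \<Longrightarrow> z \<sqinter>\<^bsub>vsum2 f\<^esub> w = vmeet z w"
  using lattice_by_join_meet[OF partial_order_vsum2, of vjoin vmeet] vjoin_lub vmeet_glb
  by (simp_all add: vsum2_def)

lemma vjoin_vmeet_modular:
  assumes carrier: "x \<in> carrier (vsum2 f)" "y \<in> carrier (vsum2 f)" "z \<in> carrier (vsum2 f)"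
    and "vsum2_le f x z"
  shows "vjoin x (vmeet y z) = vmeet (vjoin x y) z"
proof -
  define lhs rhs where "lhs = vjoin x (vmeet y z)" and "rhs = vmeet (vjoin x y) z"
  have yz: "vmeet y z \<in> carrier (vsum2 f)" and xy: "vjoin x y \<in> carrier (vsum2 f)"
    using vmeet_closed vjoin_closed carrier by blast+
  have "vsum2_le f (vmeet y z) z" "vsum2_le f x (vjoin x y)"
    using vmeet_glb[OF carrier(2,3)] vjoin_lub[OF carrier(1,2)] by simp_all
  then have lhs: "lhs \<in> carrier (vsum2 f)" "vsum2_le f x lhs" "vsum2_le f lhs z"
    and rhs: "rhs \<in> carrier (vsum2 f)" "vsum2_le f x rhs" "vsum2_le f rhs z"
    using vjoin_lub[OF carrier(1) yz] vmeet_glb[OF xy carrier(3)] assms(4) carrier(1,3)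
    unfolding lhs_def rhs_def by simp_all
  have proj_le: "proj_L x \<le> proj_L z" "proj_U x \<le> proj_U z"
    using le_iff_proj[OF carrier(1,3)] assms(4) by simp_all
  have L: "proj_L lhs = proj_L rhs" if "isl x"
    using modular_L[OF proj_le(1), of "proj_L y"] that carrier yz xy
    by (simp add: lhs_def rhs_def proj_L_vjoin proj_L_vmeet)
  have U: "proj_U lhs = proj_U rhs" if "\<not> isl z"
    using modular_U[OF proj_le(2), of "proj_U y"] that carrier yz xy
    by (simp add: lhs_def rhs_def proj_U_vjoin proj_U_vmeet)
  consider "isl x" "isl z" | "isl x" "\<not> isl z" | "\<not> isl x" "\<not> isl z"
    using assms(4) by (cases x; cases z) auto
  then have "lhs = rhs"
  proof cases
    case 1
    then obtain a b where "lhs = Inl a" "rhs = Inl b"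
      using lhs(3) rhs(3) by (cases lhs; cases rhs; cases z) auto
    with L 1 show ?thesis by simp
  next
    case 2
    with L U lhs(1) rhs(1) show ?thesis by (simp add: proj_inj)
  next
    case 3
    then obtain a b where "lhs = Inr a" "rhs = Inr b"
      using lhs(2) rhs(2) by (cases lhs; cases rhs; cases x) auto
    with U 3 show ?thesis by simp
  qed
  then show ?thesis
    unfolding lhs_def rhs_def .
qed

lemma modular_lattice_vsum2: "modular_lattice (vsum2 f)"
  unfolding modular_lattice_def
proof (intro conjI ballI impI)
  fix x y z assume carrier: "x \<in> carrier (vsum2 f)" "y \<in> carrier (vsum2 f)" "z \<in> carrier (vsum2 f)"
    and "x \<sqsubseteq>\<^bsub>vsum2 f\<^esub> z"
  then have "vsum2_le f x z"
    by (simp add: vsum2_def)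
  then show "x \<squnion>\<^bsub>vsum2 f\<^esub> (y \<sqinter>\<^bsub>vsum2 f\<^esub> z) = (x \<squnion>\<^bsub>vsum2 f\<^esub> y) \<sqinter>\<^bsub>vsum2 f\<^esub> z"
    using vjoin_vmeet_modular[OF carrier] carrier
    by (simp add: join_vsum2 meet_vsum2 vmeet_closed vjoin_closed)
qed (rule lattice_vsum2)

end

theorem lemma3p6:
  fixes f :: "'a::{finite, bounded_lattice} \<Rightarrow> 'b::{finite, bounded_lattice}"
  assumes "is_modular TYPE('a)"
    and "is_modular TYPE('b)"
    and "card (coatoms :: 'a set) = 2"
    and "card (atoms :: 'b set) = 2"
    and "bij_betw f coatoms atoms"
  shows "modular_lattice (vsum2 f)"
proof -
  obtain c1 c2 :: 'a where coatoms: "coatoms = {c1, c2}" "c1 \<noteq> c2"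
    using assms(3) card_2_iff by metis
  have "atoms = {f c1, f c2}"
    using bij_betw_imp_surj_on[OF assms(5)] by (simp add: coatoms(1))
  moreover have "f c1 \<noteq> f c2"
    using inj_on_contraD[OF bij_betw_imp_inj_on[OF assms(5)] coatoms(2)] by (simp add: coatoms(1))
  ultimately interpret vsum2_setting f c1 c2
    using assms(1,2) coatoms unfolding is_modular_def by unfold_locales auto
  show ?thesis
    by (rule modular_lattice_vsum2)
qed

end
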